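(* Let $f(z)=z+\sum_{n=2}^{\infty}a_nz^n$ belong to $\mathcal{S}^*_{ch}$, and let $\gamma_1,\gamma_2,\gamma_3$ be its first three logarithmic coefficients, i.e. $$\gamma_1=\tfrac12 a_2,\qquad \gamma_2=\tfrac12\Big(a_3-\tfrac12 a_2^2\Big),\qquad \gamma_3=\tfrac12\Big(a_4-a_2a_3+\tfrac13 a_2^3\Big).$$ Then $|\gamma_n|\le \frac{1}{2n}$ for $n=1,2,3$. These inequalities are sharp: for each $n\in\{1,2,3\}$, equality $|\gamma_n|=\frac1{2n}$ holds for the function $$f_n(z)=z\exp\left(\int_0^z\frac{t^n+\cosh(t^n)-1}{t}\,dt\right),\quad z\in\mathbb{D},$$ which belongs to $\mathcal{S}^*_{ch}$.
   Context: $\mathbb{D}=\{z\in\mathbb{C}:|z|<1\}$. $\mathcal{A}$ is the class of analytic functions $f$ on $\mathbb{D}$ with $f(0)=0$, $f'(0)=1$, i.e. $f(z)=z+\sum_{n\ge2}a_nz^n$. For analytic $g,h$ on $\mathbb{D}$, $g\prec h$ (subordination) means there is an analytic $\omega$ on $\mathbb{D}$ with $\omega(0)=0$, $|\omega(z)|<1$, and $g=h\circ\omega$. The class $\mathcal{S}^*_{ch}$ consists of all $f\in\mathcal{A}$ with $\frac{zf'(z)}{f(z)}\prec \varphi_0(z):=z+\cosh z$ on $\mathbb{D}$. The logarithmic coefficients $\gamma_n$ of $f$ are defined by $\log\frac{f(z)}{z}=2\sum_{n\ge1}\gamma_nz^n$ (with $\log 1=0$); the formulas for $\gamma_1,\gamma_2,\gamma_3$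 in terms of $a_2,a_3,a_4$ follow from this definition. *)

theory Defs
  imports "HOL-Complex_Analysis.Complex_Analysis"
begin

abbreviation unit_disk :: "complex set" where
  "unit_disk \<equiv> ball 0 1"

definition subordinate :: "(complex \<Rightarrow> complex) \<Rightarrow> (complex \<Rightarrow> complex) \<Rightarrow> bool" where
  "subordinate g h \<longleftrightarrow>
     (\<exists>\<omega>. \<omega> holomorphic_on unit_disk \<and> \<omega> 0 = 0 \<and>
          (\<forall>z\<in>unit_disk. norm (\<omega> z) < 1) \<and>
          (\<forall>z\<in>unit_disk. g z = h (\<omega> z)))"

definition phi0 :: "complex \<Rightarrow> complex" where
  "phi0 z = z + cosh z"

definition classA :: "(complex \<Rightarrow> complex) \<Rightarrow> bool" where
  "classA f \<longleftrightarrow> f holomorphic_on unit_disk \<and> f 0 = 0 \<and> deriv f 0 = 1"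

text \<open>The class S*_ch: z f'(z)/f(z) (an analytic function on the disk, i.e. f has no
  zeros in the punctured disk and the quotient extends analytically to 0) is subordinate to phi0.\<close>
definition Sstar_ch :: "(complex \<Rightarrow> complex) \<Rightarrow> bool" where
  "Sstar_ch f \<longleftrightarrow> classA f \<and>
     (\<exists>p. p holomorphic_on unit_disk \<and>
          (\<forall>z\<in>unit_disk - {0}. f z \<noteq> 0 \<and> p z = z * deriv f z / f z) \<and>
          subordinate p phi0)"

definition taylor_coeff :: "(complex \<Rightarrow> complex) \<Rightarrow> nat \<Rightarrow> complex" where
  "taylor_coeff f n = (deriv ^^ n) f 0 / of_nat (fact n)"

definition log_coeff :: "(complex \<Rightarrow> complex) \<Rightarrow> nat \<Rightarrow> complex" where
  "log_coeff f n =
     (let a2 = taylor_coeff f 2; a3 = taylor_coeff f 3; a4 = taylor_coeff f 4 in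
      if n = 1 then a2 / 2
      else if n = 2 then (a3 - a2^2 / 2) / 2
      else if n = 3 then (a4 - a2 * a3 + a2^3 / 3) / 2
      else 0)"

definition extremal :: "nat \<Rightarrow> complex \<Rightarrow> complex" where
  "extremal n z = z * exp (contour_integral (linepath 0 z) (\<lambda>t. (t^n + cosh (t^n) - 1) / t))"

end

theory Submission
  imports Defs
begin

text \<open>Write z f'(z) / f(z) = p(z) = phi0(omega(z)) with a Schwarz function omega = sum w_k z^k.
  Comparing coefficients in z f' = p f gives gamma_n = p_n / (2n) for n <= 3, hence
  gamma_1 = w_1 / 2, gamma_2 = (w_2 + w_1^2 / 2) / 4 and gamma_3 = (w_3 + w_1 w_2) / 6.
  One step of the Schur algorithm writes omega(z) = z h(z) with
  h = (b + z psi) / (1 + conj b z psi), where b = w_1 and |psi| <= 1, so that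
  w_2 = (1 - |b|^2) psi(0) and w_3 = (1 - |b|^2) (psi'(0) - conj b psi(0)^2). The Schwarz-Pick
  bound |psi'(0)| <= 1 - |psi(0)|^2 and an elementary inequality on the unit square then give
  |w_1|, |w_2 + w_1^2 / 2|, |w_3 + w_1 w_2| <= 1. For omega(z) = z^n the relevant combination
  equals 1, and the associated function is f_n.\<close>

lemma fps_expansion_unit_disk:
  "f holomorphic_on unit_disk \<Longrightarrow> f has_fps_expansion fps_expansion f 0"
  by (rule has_fps_expansion_fps_expansion) auto

lemma has_fps_expansion_eq_on_unit_disk:
  fixes f g :: "complex \<Rightarrow> complex"
  assumes "f has_fps_expansion F" "g has_fps_expansion G"
    and "\<And>z. z \<in> unit_disk \<Longrightarrow> f z = g z"
  shows "F = G"
proof -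
  have "eventually (\<lambda>z. f z = g z) (nhds 0)"
    using eventually_nhds_in_open[of unit_disk 0]
    by (auto elim!: eventually_mono simp: assms(3))
  then have "g has_fps_expansion F"
    using assms(1) has_fps_expansion_cong by blast
  then show ?thesis
    using assms(2) fps_expansion_unique_complex by blast
qed

lemma fps_expansion_constant_on_unit_disk:
  assumes "\<And>z. z \<in> unit_disk \<Longrightarrow> g z = c"
  shows "fps_expansion g 0 = fps_const c"
proof (rule fps_expansion_eqI)
  have "eventually (\<lambda>z. c = g z) (nhds 0)"
    using eventually_nhds_in_open[of unit_disk 0]
    by (auto elim!: eventually_mono simp: assms)
  then show "g has_fps_expansion fps_const c"
    using has_fps_expansion_cong[of "\<lambda>_. c" g "fps_const c" "fps_const c"] by simp
qed

lemma taylor_coeff_eq_fps_nth: "taylor_coeff f n = fps_nth (fps_expansion f 0) n"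
  by (simp add: taylor_coeff_def fps_expansion_def)

lemma unit_disk_holomorphic_constant_or_norm_less:
  assumes hol: "g holomorphic_on unit_disk" and le: "\<And>z. z \<in> unit_disk \<Longrightarrow> norm (g z) \<le> 1"
  shows "(\<forall>z\<in>unit_disk. g z = g 0) \<or> (\<forall>z\<in>unit_disk. norm (g z) < 1)"
proof (rule disjCI)
  assume "\<not> (\<forall>z\<in>unit_disk. norm (g z) < 1)"
  then obtain \<xi> where \<xi>: "\<xi> \<in> unit_disk" "norm (g \<xi>) = 1"
    using le by force
  have "g constant_on unit_disk"
    by (rule maximum_modulus_principle[OF hol _ _ _ order_refl \<xi>(1)]) (use le \<xi> in auto)
  then show "\<forall>z\<in>unit_disk. g z = g 0"
    by (auto simp: constant_on_def)
qed

lemma Schwarz_factor: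
  assumes hol: "f holomorphic_on unit_disk" and f0: "f 0 = 0"
    and lt: "\<And>z. z \<in> unit_disk \<Longrightarrow> norm (f z) < 1"
  obtains h where "h holomorphic_on unit_disk" "\<And>z. z \<in> unit_disk \<Longrightarrow> f z = z * h z"
    "\<And>z. z \<in> unit_disk \<Longrightarrow> norm (h z) \<le> 1"
proof -
  obtain h where h: "h holomorphic_on unit_disk"
    and fh: "\<And>z. norm z < 1 \<Longrightarrow> f z = z * h z" and h0: "deriv f 0 = h 0"
    using Schwarz3[OF hol f0] by blast
  have "norm (h z) \<le> 1" if z: "z \<in> unit_disk" for z
  proof (cases "z = 0")
    case True
    then show ?thesis
      using Schwarz_Lemma(2)[OF hol f0, of 0] lt h0 by auto
  next
    case False
    have "norm z * norm (h z) \<le> norm z * 1"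
      using Schwarz_Lemma(1)[OF hol f0, of z] lt z fh[of z] by (auto simp: norm_mult)
    then show ?thesis
      using False by simp
  qed
  then show ?thesis
    using that h fh by auto
qed

lemma unit_disk_self_map_Schur_step:
  assumes hol: "g holomorphic_on unit_disk" and lt: "\<And>z. z \<in> unit_disk \<Longrightarrow> norm (g z) < 1"
  obtains \<psi> where "\<psi> holomorphic_on unit_disk" "\<And>z. z \<in> unit_disk \<Longrightarrow> norm (\<psi> z) \<le> 1"
    "\<And>z. z \<in> unit_disk \<Longrightarrow> g z * (1 + cnj (g 0) * (z * \<psi> z)) = g 0 + z * \<psi> z"
proof -
  define a where "a = g 0"
  have a: "norm a < 1"
    using lt[of 0] by (simp add: a_def)
  define \<phi> where "\<phi> = Moebius_function 0 a \<circ> g"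
  have hol\<phi>: "\<phi> holomorphic_on unit_disk"
    unfolding \<phi>_def using hol lt
    by (intro holomorphic_on_compose_gen[OF hol Moebius_function_holomorphic[OF a]]) auto
  have \<phi>0: "\<phi> 0 = 0"
    by (simp add: \<phi>_def a_def Moebius_function_eq_zero)
  have lt\<phi>: "norm (\<phi> z) < 1" if "z \<in> unit_disk" for z
    using Moebius_function_norm_lt_1[OF a lt[OF that]] by (simp add: \<phi>_def)
  obtain \<psi> where hol\<psi>: "\<psi> holomorphic_on unit_disk"
    and \<phi>\<psi>: "\<And>z. z \<in> unit_disk \<Longrightarrow> \<phi> z = z * \<psi> z"
    and \<psi>_le: "\<And>z. z \<in> unit_disk \<Longrightarrow> norm (\<psi> z) \<le> 1"
    using Schwarz_factor[OF hol\<phi> \<phi>0 lt\<phi>] by blast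
  have "g z * (1 + cnj a * (z * \<psi> z)) = a + z * \<psi> z" if z: "z \<in> unit_disk" for z
  proof -
    have "norm (cnj a * g z) < 1"
      using norm_mult_less[of "cnj a" 1 "g z" 1] a lt[OF z] by simp
    then have "1 - cnj a * g z \<noteq> 0"
      by auto
    moreover have "(g z - a) / (1 - cnj a * g z) = z * \<psi> z"
      using \<phi>\<psi>[OF z] by (simp add: \<phi>_def Moebius_function_simple)
    ultimately have "g z - a = z * \<psi> z * (1 - cnj a * g z)"
      by (simp add: divide_eq_eq)
    then show ?thesis
      by (simp add: algebra_simps)
  qed
  then show ?thesis
    using that hol\<psi> \<psi>_le by (simp add: a_def)
qed

lemma unit_disk_self_map_Schur_coeffs:
  assumes hol: "g holomorphic_on unit_disk" and lt: "\<And>z. z \<in> unit_disk \<Longrightarrow> norm (g z) < 1"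
  obtains \<psi> where "\<psi> holomorphic_on unit_disk" "\<And>z. z \<in> unit_disk \<Longrightarrow> norm (\<psi> z) \<le> 1"
    "fps_nth (fps_expansion g 0) 1 = of_real (1 - norm (g 0) ^ 2) * \<psi> 0"
    "fps_nth (fps_expansion g 0) 2 = of_real (1 - norm (g 0) ^ 2) * (deriv \<psi> 0 - cnj (g 0) * \<psi> 0 ^ 2)"
proof -
  obtain \<psi> where hol\<psi>: "\<psi> holomorphic_on unit_disk"
    and \<psi>_le: "\<And>z. z \<in> unit_disk \<Longrightarrow> norm (\<psi> z) \<le> 1"
    and eq: "\<And>z. z \<in> unit_disk \<Longrightarrow> g z * (1 + cnj (g 0) * (z * \<psi> z)) = g 0 + z * \<psi> z"
    using unit_disk_self_map_Schur_step[OF hol lt] by blast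
  define a where "a = g 0"
  define G where "G = fps_expansion g 0"
  define \<Psi> where "\<Psi> = fps_expansion \<psi> 0"
  have G: "g has_fps_expansion G" and \<Psi>: "\<psi> has_fps_expansion \<Psi>"
    unfolding G_def \<Psi>_def using hol hol\<psi> by (simp_all add: fps_expansion_unit_disk)
  have "G * (1 + fps_const (cnj a) * (fps_X * \<Psi>)) = fps_const a + fps_X * \<Psi>"
    by (rule has_fps_expansion_eq_on_unit_disk[OF _ _ eq])
      (auto simp: a_def intro!: fps_expansion_intros G \<Psi>)
  then have "fps_nth (G * (1 + fps_const (cnj a) * (fps_X * \<Psi>))) n
      = fps_nth (fps_const a + fps_X * \<Psi>) n" for n
    by simp
  from this[of 1] this[of 2]
  have c1: "fps_nth G 1 + fps_nth G 0 * cnj a * fps_nth \<Psi> 0 = fps_nth \<Psi> 0"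
    and c2: "fps_nth G 2 + fps_nth G 1 * cnj a * fps_nth \<Psi> 0 + fps_nth G 0 * cnj a * fps_nth \<Psi> 1
      = fps_nth \<Psi> 1"
    by (simp_all add: fps_mult_nth numeral_2_eq_2 algebra_simps)
  have G0: "fps_nth G 0 = a" and \<Psi>01: "fps_nth \<Psi> 0 = \<psi> 0" "fps_nth \<Psi> 1 = deriv \<psi> 0"
    by (simp_all add: G_def \<Psi>_def a_def fps_expansion_def)
  have s: "of_real (1 - norm a ^ 2) = 1 - a * cnj a"
    by (simp only: of_real_diff of_real_1 complex_norm_square)
  have G1: "fps_nth G 1 = of_real (1 - norm a ^ 2) * \<psi> 0"
    unfolding s using c1 unfolding G0 \<Psi>01 by (simp add: algebra_simps)
  have "fps_nth G 2 = (1 - a * cnj a) * deriv \<psi> 0 - cnj a * \<psi> 0 * fps_nth G 1"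
    using c2 unfolding G0 \<Psi>01 by (simp add: algebra_simps)
  also have "\<dots> = of_real (1 - norm a ^ 2) * (deriv \<psi> 0 - cnj a * \<psi> 0 ^ 2)"
    unfolding G1 s by (simp add: algebra_simps power2_eq_square)
  finally have G2: "fps_nth G 2 = of_real (1 - norm a ^ 2) * (deriv \<psi> 0 - cnj a * \<psi> 0 ^ 2)" .
  show ?thesis
    using that[OF hol\<psi> \<psi>_le] G1 G2 by (simp add: G_def a_def)
qed

lemma Schwarz_Pick_at_0:
  assumes hol: "g holomorphic_on unit_disk" and le: "\<And>z. z \<in> unit_disk \<Longrightarrow> norm (g z) \<le> 1"
  shows "norm (deriv g 0) \<le> 1 - norm (g 0) ^ 2"
proof -
  have d: "deriv g 0 = fps_nth (fps_expansion g 0) 1"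
    by (simp add: fps_expansion_def)
  have s: "0 \<le> 1 - norm (g 0) ^ 2"
    using le[of 0] by (simp add: power_le_one)
  from unit_disk_holomorphic_constant_or_norm_less[OF hol le] show ?thesis
  proof
    assume "\<forall>z\<in>unit_disk. g z = g 0"
    then have "fps_expansion g 0 = fps_const (g 0)"
      by (intro fps_expansion_constant_on_unit_disk) blast
    then show ?thesis
      using s unfolding d by simp
  next
    assume lt: "\<forall>z\<in>unit_disk. norm (g z) < 1"
    obtain \<psi> where \<psi>_le: "\<And>z. z \<in> unit_disk \<Longrightarrow> norm (\<psi> z) \<le> 1"
      and eq: "fps_nth (fps_expansion g 0) 1 = of_real (1 - norm (g 0) ^ 2) * \<psi> 0"
      using unit_disk_self_map_Schur_coeffs[OF hol lt[rule_format]] by blast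
    have "norm (deriv g 0) = (1 - norm (g 0) ^ 2) * norm (\<psi> 0)"
      unfolding d eq norm_mult norm_of_real using s by simp
    also have "\<dots> \<le> 1 - norm (g 0) ^ 2"
      using \<psi>_le[of 0] s by (simp add: mult_left_le)
    finally show ?thesis .
  qed
qed

lemma unit_disk_self_map_coeffs:
  assumes hol: "g holomorphic_on unit_disk" and le: "\<And>z. z \<in> unit_disk \<Longrightarrow> norm (g z) \<le> 1"
  obtains e0 e1 where "norm e0 \<le> 1" "norm e1 \<le> 1 - norm e0 ^ 2"
    "fps_nth (fps_expansion g 0) 1 = of_real (1 - norm (g 0) ^ 2) * e0"
    "fps_nth (fps_expansion g 0) 2 = of_real (1 - norm (g 0) ^ 2) * (e1 - cnj (g 0) * e0 ^ 2)"
  using unit_disk_holomorphic_constant_or_norm_less[OF hol le]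
proof
  assume "\<forall>z\<in>unit_disk. g z = g 0"
  then have "fps_expansion g 0 = fps_const (g 0)"
    by (intro fps_expansion_constant_on_unit_disk) blast
  then show ?thesis
    using that[of 0 0] by simp
next
  assume lt: "\<forall>z\<in>unit_disk. norm (g z) < 1"
  obtain \<psi> where hol\<psi>: "\<psi> holomorphic_on unit_disk"
    and \<psi>_le: "\<And>z. z \<in> unit_disk \<Longrightarrow> norm (\<psi> z) \<le> 1"
    and "fps_nth (fps_expansion g 0) 1 = of_real (1 - norm (g 0) ^ 2) * \<psi> 0"
      "fps_nth (fps_expansion g 0) 2 = of_real (1 - norm (g 0) ^ 2) * (deriv \<psi> 0 - cnj (g 0) * \<psi> 0 ^ 2)"
    using unit_disk_self_map_Schur_coeffs[OF hol lt[rule_format]] by blast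
  moreover have "norm (\<psi> 0) \<le> 1"
    using \<psi>_le[of 0] by simp
  ultimately show ?thesis
    using that[of "\<psi> 0" "deriv \<psi> 0"] Schwarz_Pick_at_0[OF hol\<psi> \<psi>_le] by simp
qed

lemma Schwarz_function_coeffs:
  assumes hol: "\<omega> holomorphic_on unit_disk" and \<omega>0: "\<omega> 0 = 0"
    and lt: "\<And>z. z \<in> unit_disk \<Longrightarrow> norm (\<omega> z) < 1"
  obtains b e0 e1 where "norm b \<le> 1" "norm e0 \<le> 1" "norm e1 \<le> 1 - norm e0 ^ 2"
    "fps_nth (fps_expansion \<omega> 0) 1 = b"
    "fps_nth (fps_expansion \<omega> 0) 2 = of_real (1 - norm b ^ 2) * e0"
    "fps_nth (fps_expansion \<omega> 0) 3 = of_real (1 - norm b ^ 2) * (e1 - cnj b * e0 ^ 2)"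
proof -
  obtain h where holh: "h holomorphic_on unit_disk" and \<omega>h: "\<And>z. z \<in> unit_disk \<Longrightarrow> \<omega> z = z * h z"
    and h_le: "\<And>z. z \<in> unit_disk \<Longrightarrow> norm (h z) \<le> 1"
    using Schwarz_factor[OF hol \<omega>0 lt] by blast
  have "fps_expansion \<omega> 0 = fps_X * fps_expansion h 0"
    by (rule has_fps_expansion_eq_on_unit_disk[OF fps_expansion_unit_disk[OF hol] _ \<omega>h])
      (intro fps_expansion_intros fps_expansion_unit_disk holh)
  then have shift: "fps_nth (fps_expansion \<omega> 0) (Suc n) = fps_nth (fps_expansion h 0) n" for n
    by simp
  obtain e0 e1 where "norm e0 \<le> 1" "norm e1 \<le> 1 - norm e0 ^ 2"
    "fps_nth (fps_expansion h 0) 1 = of_real (1 - norm (h 0) ^ 2) * e0"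
    "fps_nth (fps_expansion h 0) 2 = of_real (1 - norm (h 0) ^ 2) * (e1 - cnj (h 0) * e0 ^ 2)"
    using unit_disk_self_map_coeffs[OF holh h_le] by blast
  moreover have "fps_nth (fps_expansion h 0) 0 = h 0" "norm (h 0) \<le> 1"
    using h_le[of 0] by (simp_all add: fps_expansion_def)
  ultimately show ?thesis
    using that[of "h 0" e0 e1] shift[of 0] shift[of 1] shift[of 2]
    by (simp add: numeral_2_eq_2 numeral_3_eq_3)
qed

lemma unit_square_cubic_le_1:
  fixes x u :: real
  assumes "0 \<le> x" "x \<le> 1" "0 \<le> u" "u \<le> 1"
  shows "(1 - x^2) * (1 - u^2 + x * u^2 + x * u) \<le> 1"
proof -
  define v where "v = u * (1 - x)"
  have "0 \<le> v" "v \<le> 1"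
    unfolding v_def using assms by (auto intro: mult_le_one)
  then have "0 \<le> (1 - v) * (x - v/2)^2 + v^2 * (3 + v) / 4"
    by simp
  also have "\<dots> = 1 - (1 - x^2) * (1 - u^2 + x * u^2 + x * u)"
    unfolding v_def by (simp add: field_simps power2_eq_square power3_eq_cube)
  finally show ?thesis
    by simp
qed

lemma Schwarz_function_coeff_bounds:
  assumes hol: "\<omega> holomorphic_on unit_disk" and \<omega>0: "\<omega> 0 = 0"
    and lt: "\<And>z. z \<in> unit_disk \<Longrightarrow> norm (\<omega> z) < 1"
  defines "w \<equiv> fps_nth (fps_expansion \<omega> 0)"
  shows "norm (w 1) \<le> 1" "norm (w 2 + w 1 ^ 2 / 2) \<le> 1" "norm (w 3 + w 1 * w 2) \<le> 1"
proof -
  obtain b e0 e1 where b: "norm b \<le> 1" and e0: "norm e0 \<le> 1" and e1: "norm e1 \<le> 1 - norm e0 ^ 2"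
    and w1: "w 1 = b" and w2: "w 2 = of_real (1 - norm b ^ 2) * e0"
    and w3: "w 3 = of_real (1 - norm b ^ 2) * (e1 - cnj b * e0 ^ 2)"
    using Schwarz_function_coeffs[OF hol \<omega>0 lt] unfolding w_def by blast
  define s where "s = 1 - norm b ^ 2"
  have s: "0 \<le> s" "s \<le> 1"
    using b by (simp_all add: s_def power_le_one)
  have w2s: "w 2 = of_real s * e0" and w3s: "w 3 = of_real s * (e1 - cnj b * e0 ^ 2)"
    unfolding w2 w3 s_def by simp_all
  show "norm (w 1) \<le> 1"
    using b w1 by simp
  have "norm (w 2 + w 1 ^ 2 / 2) \<le> s * norm e0 + norm b ^ 2 / 2"
    using norm_triangle_ineq[of "w 2" "w 1 ^ 2 / 2"] s
    unfolding w1 w2s by (simp add: norm_mult norm_power norm_divide)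
  also have "\<dots> \<le> s + norm b ^ 2 / 2"
    using e0 s by (simp add: mult_left_le)
  also have "\<dots> \<le> 1"
    by (simp add: s_def)
  finally show "norm (w 2 + w 1 ^ 2 / 2) \<le> 1" .
  have "w 3 + w 1 * w 2 = of_real s * (e1 - cnj b * e0 ^ 2 + b * e0)"
    unfolding w1 w2s w3s by (simp add: algebra_simps)
  then have "norm (w 3 + w 1 * w 2) = s * norm (e1 - cnj b * e0 ^ 2 + b * e0)"
    using s by (simp add: norm_mult)
  also have "\<dots> \<le> s * (norm e1 + norm b * norm e0 ^ 2 + norm b * norm e0)"
  proof (rule mult_left_mono[OF _ s(1)])
    show "norm (e1 - cnj b * e0 ^ 2 + b * e0) \<le> norm e1 + norm b * norm e0 ^ 2 + norm b * norm e0"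
      using norm_triangle_ineq[of "e1 - cnj b * e0 ^ 2" "b * e0"] norm_triangle_ineq4[of e1 "cnj b * e0 ^ 2"]
      by (simp add: norm_mult norm_power)
  qed
  also have "\<dots> \<le> s * (1 - norm e0 ^ 2 + norm b * norm e0 ^ 2 + norm b * norm e0)"
    using e1 s by (simp add: mult_left_mono)
  also have "\<dots> \<le> 1"
    unfolding s_def using b e0 by (intro unit_square_cubic_le_1) auto
  finally show "norm (w 3 + w 1 * w 2) \<le> 1" .
qed

lemma phi0_holomorphic: "phi0 holomorphic_on A"
  unfolding phi0_def by (rule analytic_imp_holomorphic) (intro analytic_intros)

definition phi0_fps :: "complex fps" where
  "phi0_fps = fps_X + fps_const (1/2) * (fps_exp 1 + fps_exp (-1))"

lemma phi0_has_fps_expansion: "phi0 has_fps_expansion phi0_fps"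
proof -
  have "(\<lambda>z. z + (1/2) * (exp z + exp (-z))) has_fps_expansion phi0_fps"
    unfolding phi0_fps_def by (intro fps_expansion_intros)
  moreover have "(\<lambda>z. z + (1/2) * (exp z + exp (-z))) = phi0"
    by (auto simp: phi0_def cosh_def scaleR_conv_of_real field_simps)
  ultimately show ?thesis
    by simp
qed

lemma fps_compose_phi0_fps_nth:
  fixes W :: "complex fps"
  assumes "fps_nth W 0 = 0"
  shows "fps_nth (phi0_fps oo W) 1 = fps_nth W 1"
    "fps_nth (phi0_fps oo W) 2 = fps_nth W 2 + fps_nth W 1 ^ 2 / 2"
    "fps_nth (phi0_fps oo W) 3 = fps_nth W 3 + fps_nth W 1 * fps_nth W 2"
proof -
  have phi0_fps_nth: "fps_nth phi0_fps 1 = 1" "fps_nth phi0_fps 2 = 1/2" "fps_nth phi0_fps 3 = 0"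
    by (simp_all add: phi0_fps_def fps_exp_def numeral_3_eq_3 fact_numeral)
  have "fps_nth (W ^ 2) 1 = 0" "fps_nth (W ^ 2) 2 = fps_nth W 1 ^ 2"
    "fps_nth (W ^ 2) 3 = 2 * fps_nth W 1 * fps_nth W 2"
    "fps_nth (W ^ 3) 1 = 0" "fps_nth (W ^ 3) 2 = 0" "fps_nth (W ^ 3) 3 = fps_nth W 1 ^ 3"
    using assms by (simp_all add: power2_eq_square power3_eq_cube fps_mult_nth numeral_3_eq_3 numeral_2_eq_2)
  with assms phi0_fps_nth show "fps_nth (phi0_fps oo W) 1 = fps_nth W 1"
    "fps_nth (phi0_fps oo W) 2 = fps_nth W 2 + fps_nth W 1 ^ 2 / 2"
    "fps_nth (phi0_fps oo W) 3 = fps_nth W 3 + fps_nth W 1 * fps_nth W 2"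
    by (simp_all add: fps_compose_nth numeral_3_eq_3 numeral_2_eq_2)
qed

lemma log_coeff_eq_logderiv_coeffs:
  assumes hol: "f holomorphic_on unit_disk" and f0: "f 0 = 0" and f'0: "deriv f 0 = 1"
    and P: "p has_fps_expansion P" and eq: "\<And>z. z \<in> unit_disk \<Longrightarrow> z * deriv f z = p z * f z"
  shows "log_coeff f 1 = fps_nth P 1 / 2" "log_coeff f 2 = fps_nth P 2 / 4"
    "log_coeff f 3 = fps_nth P 3 / 6"
proof -
  define F where "F = fps_expansion f 0"
  have F: "f has_fps_expansion F"
    unfolding F_def by (rule fps_expansion_unit_disk[OF hol])
  have "(\<lambda>z. z * deriv f z) has_fps_expansion fps_X * fps_deriv F"
    and "(\<lambda>z. p z * f z) has_fps_expansion P * F"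
    by (intro fps_expansion_intros F P)+
  then have "fps_X * fps_deriv F = P * F"
    using eq by (rule has_fps_expansion_eq_on_unit_disk)
  then have e: "fps_nth (fps_X * fps_deriv F) n = fps_nth (P * F) n" for n
    by simp
  have F01: "fps_nth F 0 = 0" "fps_nth F 1 = 1"
    using f0 f'0 by (simp_all add: F_def fps_expansion_def)
  then have "fps_nth P 0 = 1"
    using e[of 1] by (simp add: fps_mult_nth)
  then show "log_coeff f 1 = fps_nth P 1 / 2" "log_coeff f 2 = fps_nth P 2 / 4"
    "log_coeff f 3 = fps_nth P 3 / 6"
    using e[of 2] e[of 3] e[of 4] F01
    by (simp_all add: log_coeff_def taylor_coeff_eq_fps_nth F_def[symmetric]
        fps_mult_nth numeral_3_eq_3 numeral_2_eq_2 eval_nat_numeral field_simps)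
qed

lemma log_coeff_phi0_subordinate:
  assumes hol: "f holomorphic_on unit_disk" and f0: "f 0 = 0" and f'0: "deriv f 0 = 1"
    and hol\<omega>: "\<omega> holomorphic_on unit_disk" and \<omega>0: "\<omega> 0 = 0"
    and eq: "\<forall>z\<in>unit_disk. z * deriv f z = phi0 (\<omega> z) * f z"
  defines "w \<equiv> fps_nth (fps_expansion \<omega> 0)"
  shows "log_coeff f 1 = w 1 / 2" "log_coeff f 2 = (w 2 + w 1 ^ 2 / 2) / 4"
    "log_coeff f 3 = (w 3 + w 1 * w 2) / 6"
proof -
  have W0: "fps_nth (fps_expansion \<omega> 0) 0 = 0"
    using \<omega>0 by (simp add: fps_expansion_def)
  have "(phi0 \<circ> \<omega>) has_fps_expansion (phi0_fps oo fps_expansion \<omega> 0)"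
    by (rule has_fps_expansion_compose[OF phi0_has_fps_expansion fps_expansion_unit_disk[OF hol\<omega>] W0])
  from log_coeff_eq_logderiv_coeffs[OF hol f0 f'0 this] eq fps_compose_phi0_fps_nth[OF W0]
  show "log_coeff f 1 = w 1 / 2" "log_coeff f 2 = (w 2 + w 1 ^ 2 / 2) / 4"
    "log_coeff f 3 = (w 3 + w 1 * w 2) / 6"
    by (simp_all add: w_def)
qed

lemma Sstar_chE:
  assumes "Sstar_ch f"
  obtains \<omega> where "\<omega> holomorphic_on unit_disk" "\<omega> 0 = 0" "\<And>z. z \<in> unit_disk \<Longrightarrow> norm (\<omega> z) < 1"
    "\<forall>z\<in>unit_disk. z * deriv f z = phi0 (\<omega> z) * f z"
proof -
  obtain p \<omega> where f0: "f 0 = 0" and p: "\<forall>z\<in>unit_disk - {0}. f z \<noteq> 0 \<and> p z = z * deriv f z / f z"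
    and \<omega>: "\<omega> holomorphic_on unit_disk" "\<omega> 0 = 0" "\<forall>z\<in>unit_disk. norm (\<omega> z) < 1"
    and p\<omega>: "\<forall>z\<in>unit_disk. p z = phi0 (\<omega> z)"
    using assms unfolding Sstar_ch_def classA_def subordinate_def by blast
  have "z * deriv f z = phi0 (\<omega> z) * f z" if z: "z \<in> unit_disk" for z
  proof (cases "z = 0")
    case True
    then show ?thesis
      using f0 by simp
  next
    case False
    then have "f z \<noteq> 0" "phi0 (\<omega> z) = z * deriv f z / f z"
      using p p\<omega> z by auto
    then show ?thesis
      by (simp add: eq_divide_eq)
  qed
  then show ?thesis
    using that \<omega> by blast
qed

lemma Sstar_chI:
  assumes "classA f" and nz: "\<And>z. z \<in> unit_disk - {0} \<Longrightarrow> f z \<noteq> 0"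
    and \<omega>: "\<omega> holomorphic_on unit_disk" "\<omega> 0 = 0" "\<And>z. z \<in> unit_disk \<Longrightarrow> norm (\<omega> z) < 1"
    and eq: "\<forall>z\<in>unit_disk. z * deriv f z = phi0 (\<omega> z) * f z"
  shows "Sstar_ch f"
  unfolding Sstar_ch_def
proof (intro conjI exI[of _ "phi0 \<circ> \<omega>"])
  show "classA f"
    by fact
  show "phi0 \<circ> \<omega> holomorphic_on unit_disk"
    by (rule holomorphic_on_compose[OF \<omega>(1) phi0_holomorphic])
  show "\<forall>z\<in>unit_disk - {0}. f z \<noteq> 0 \<and> (phi0 \<circ> \<omega>) z = z * deriv f z / f z"
    using nz eq by (simp add: eq_divide_eq)
  show "subordinate (phi0 \<circ> \<omega>) phi0"
    unfolding subordinate_def using \<omega> by auto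
qed

lemma Sstar_ch_log_coeff_bound:
  assumes f: "Sstar_ch f" and n: "n \<in> {1, 2, 3}"
  shows "norm (log_coeff f n) \<le> 1 / (2 * real n)"
proof -
  obtain \<omega> where \<omega>: "\<omega> holomorphic_on unit_disk" "\<omega> 0 = 0" "\<And>z. z \<in> unit_disk \<Longrightarrow> norm (\<omega> z) < 1"
    and eq: "\<forall>z\<in>unit_disk. z * deriv f z = phi0 (\<omega> z) * f z"
    using Sstar_chE[OF f] by blast
  have "f holomorphic_on unit_disk" "f 0 = 0" "deriv f 0 = 1"
    using f by (simp_all add: Sstar_ch_def classA_def)
  note \<gamma> = log_coeff_phi0_subordinate[OF this \<omega>(1,2) eq]
  define w where "w = fps_nth (fps_expansion \<omega> 0)"
  have "norm (log_coeff f 1) = norm (w 1) / 2"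
    "norm (log_coeff f 2) = norm (w 2 + w 1 ^ 2 / 2) / 4"
    "norm (log_coeff f 3) = norm (w 3 + w 1 * w 2) / 6"
    unfolding \<gamma> norm_divide w_def by simp_all
  with n Schwarz_function_coeff_bounds[OF \<omega>, folded w_def] show ?thesis
    by auto
qed

lemma contour_integral_linepath_0_eq_primitive:
  assumes H: "\<And>w. (H has_field_derivative g w) (at w)" and Fg: "\<And>w. w \<noteq> 0 \<Longrightarrow> F w = g w"
  shows "contour_integral (linepath 0 z) F = H z - H 0"
proof (cases "z = 0")
  case False
  have "contour_integral (linepath 0 z) F = contour_integral (linepath 0 z) g"
    by (rule contour_integral_spike_finite_simple_path[of "{0}"]) (use False Fg in auto)
  also have "\<dots> = H z - H 0"
    using contour_integral_primitive[of UNIV H g "linepath 0 z"] H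
    by (auto intro: contour_integral_unique)
  finally show ?thesis .
qed simp

lemma z_exp_contour_integral_logderiv:
  fixes N :: "complex \<Rightarrow> complex"
  assumes holN: "N holomorphic_on UNIV" and N0: "N 0 = 0"
  defines "E \<equiv> \<lambda>z. z * exp (contour_integral (linepath 0 z) (\<lambda>t. N t / t))"
  shows "E holomorphic_on UNIV" "E 0 = 0" "deriv E 0 = 1" "\<And>z. z \<noteq> 0 \<Longrightarrow> E z \<noteq> 0"
    "\<And>z. z * deriv E z = (1 + N z) * E z"
proof -
  define G where "G = (\<lambda>w. if w = 0 then deriv N 0 else N w / w)"
  have "G holomorphic_on UNIV"
    unfolding G_def by (rule pole_theorem_open_0[OF holN]) (auto simp: N0)
  then obtain H where "\<And>w. w \<in> UNIV \<Longrightarrow> (H has_field_derivative G w) (at w within UNIV)"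
    using holomorphic_convex_primitive'[OF convex_UNIV open_UNIV] by blast
  then have H: "\<And>w. (H has_field_derivative G w) (at w)"
    by simp
  have E: "E z = z * exp (H z - H 0)" for z
    unfolding E_def using contour_integral_linepath_0_eq_primitive[OF H, of "\<lambda>t. N t / t"]
    by (simp add: G_def)
  have zG: "z * G z = N z" for z
    by (simp add: G_def N0)
  have "(E has_field_derivative exp (H z - H 0) * (1 + z * G z)) (at z)" for z
    unfolding E[abs_def] by (rule derivative_eq_intros H refl | simp add: algebra_simps)+
  then have dE: "(E has_field_derivative exp (H z - H 0) * (1 + N z)) (at z)" for z
    by (simp only: zG)
  then have dE': "deriv E z = exp (H z - H 0) * (1 + N z)" for z
    by (rule DERIV_imp_deriv)
  show "E holomorphic_on UNIV"
    using dE by (auto simp: holomorphic_on_open)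
  show "E 0 = 0" "deriv E 0 = 1" "\<And>z. z \<noteq> 0 \<Longrightarrow> E z \<noteq> 0" "\<And>z. z * deriv E z = (1 + N z) * E z"
    by (simp_all add: E dE' N0)
qed

lemma extremal_logderiv:
  assumes n: "n \<ge> 1"
  shows "classA (extremal n)" "\<And>z. z \<noteq> 0 \<Longrightarrow> extremal n z \<noteq> 0"
    "\<forall>z. z * deriv (extremal n) z = phi0 (z ^ n) * extremal n z"
proof -
  define N where "N = (\<lambda>t::complex. t ^ n + cosh (t ^ n) - 1)"
  have "N holomorphic_on UNIV"
    unfolding N_def by (rule analytic_imp_holomorphic) (intro analytic_intros)
  moreover have "N 0 = 0"
    using n by (simp add: N_def power_0_left)
  moreover have "extremal n = (\<lambda>z. z * exp (contour_integral (linepath 0 z) (\<lambda>t. N t / t)))"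
    by (simp add: extremal_def N_def fun_eq_iff)
  ultimately have hol: "extremal n holomorphic_on UNIV" and E0: "extremal n 0 = 0"
    and E'0: "deriv (extremal n) 0 = 1" and nz: "\<And>z. z \<noteq> 0 \<Longrightarrow> extremal n z \<noteq> 0"
    and logderiv: "\<And>z. z * deriv (extremal n) z = (1 + N z) * extremal n z"
    using z_exp_contour_integral_logderiv[of N] by simp_all
  show "classA (extremal n)"
    unfolding classA_def using holomorphic_on_subset[OF hol] E0 E'0 by blast
  show "\<And>z. z \<noteq> 0 \<Longrightarrow> extremal n z \<noteq> 0"
    by (fact nz)
  show "\<forall>z. z * deriv (extremal n) z = phi0 (z ^ n) * extremal n z"
    using logderiv by (simp add: phi0_def N_def)
qed

lemma extremal_in_Sstar_ch:
  assumes n: "n \<ge> 1"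
  shows "Sstar_ch (extremal n)"
proof (rule Sstar_chI[OF extremal_logderiv(1)[OF n]])
  show "extremal n z \<noteq> 0" if "z \<in> unit_disk - {0}" for z
    using that extremal_logderiv(2)[OF n] by blast
  show "(\<lambda>z. z ^ n) holomorphic_on unit_disk"
    by (intro holomorphic_intros)
  show "(0::complex) ^ n = 0"
    using n by (simp add: power_0_left)
  show "norm (z ^ n) < 1" if "z \<in> unit_disk" for z :: complex
    using that n by (simp add: norm_power power_less_one_iff)
  show "\<forall>z\<in>unit_disk. z * deriv (extremal n) z = phi0 (z ^ n) * extremal n z"
    using extremal_logderiv(3)[OF n] by blast
qed

lemma log_coeff_extremal:
  assumes n: "n \<in> {1, 2, 3}"
  shows "log_coeff (extremal n) n = 1 / (2 * of_nat n)"
proof -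
  have n1: "n \<ge> 1"
    using n by auto
  have E: "extremal n holomorphic_on unit_disk" "extremal n 0 = 0" "deriv (extremal n) 0 = 1"
    using extremal_logderiv(1)[OF n1] by (simp_all add: classA_def)
  have pow: "(\<lambda>z. z ^ n) holomorphic_on unit_disk" "(0::complex) ^ n = 0"
    using n1 by (auto intro!: holomorphic_intros simp: power_0_left)
  have "\<forall>z\<in>unit_disk. z * deriv (extremal n) z = phi0 (z ^ n) * extremal n z"
    using extremal_logderiv(3)[OF n1] by blast
  note \<gamma> = log_coeff_phi0_subordinate[OF E pow this]
  have "fps_expansion (\<lambda>z. z ^ n) 0 = fps_X ^ n"
    by (rule fps_expansion_eqI) (rule has_fps_expansion_fps_X_power)
  with n show ?thesis
    using \<gamma> by auto
qed

theorem theorem2p1: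
  shows "(\<forall>f. Sstar_ch f \<longrightarrow>
            (\<forall>n\<in>{1,2,3::nat}. norm (log_coeff f n) \<le> 1 / (2 * real n)))
       \<and> (\<forall>n\<in>{1,2,3::nat}. Sstar_ch (extremal n) \<and>
            norm (log_coeff (extremal n) n) = 1 / (2 * real n))"
proof (intro conjI ballI allI impI)
  show "norm (log_coeff f n) \<le> 1 / (2 * real n)" if "Sstar_ch f" "n \<in> {1, 2, 3}" for f n
    using Sstar_ch_log_coeff_bound that by blast
  fix n :: nat
  assume n: "n \<in> {1, 2, 3}"
  then show "Sstar_ch (extremal n)"
    by (intro extremal_in_Sstar_ch) auto
  show "norm (log_coeff (extremal n) n) = 1 / (2 * real n)"
    using log_coeff_extremal[OF n] by (simp add: norm_divide)
qed

end
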